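(* Let $k$ be a nonnegative integer. Then there exist rational numbers $\xi_\nu$, indexed by integer partitions $\nu$ with $|\nu|\le k$, such that for every $m\ge0$ and all real numbers $a_0<a_1<\cdots<a_m$ and $b_1<b_2<\cdots<b_m$, $$\sum_{0\le i\le m}\frac{\prod_{1\le j\le m}(a_i-b_j)}{\prod_{0\le j\le m,\ j\ne i}(a_i-a_j)}\,a_i^k=\sum_{|\nu|\le k}\xi_\nu\, q_\nu(\{a_i\},\{b_i\}).$$
   Context: For numbers $a_0,\dots,a_m$ and $b_1,\dots,b_m$ and $k\ge0$, set $q_k(\{a_i\},\{b_i\})=\sum_{i=0}^m a_i^k-\sum_{i=1}^m b_i^k$. For an integer partition $\nu=(\nu_1,\dots,\nu_\ell)$ (a weakly decreasing finite sequence of positive integers, $|\nu|=\sum\nu_j$), set $q_\nu(\{a_i\},\{b_i\})=\prod_{j=1}^{\ell}q_{\nu_j}(\{a_i\},\{b_i\})$, with $q_\emptyset=1$. *)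

theory Defs
  imports Complex_Main
begin

definition is_partition :: "nat list \<Rightarrow> bool" where
  "is_partition \<nu> \<longleftrightarrow> sorted_wrt (\<ge>) \<nu> \<and> (\<forall>x\<in>set \<nu>. 0 < x)"

definition q :: "nat \<Rightarrow> nat \<Rightarrow> (nat \<Rightarrow> real) \<Rightarrow> (nat \<Rightarrow> real) \<Rightarrow> real" where
  "q m k a b = (\<Sum>i=0..m. a i ^ k) - (\<Sum>i=1..m. b i ^ k)"

definition q_part :: "nat \<Rightarrow> nat list \<Rightarrow> (nat \<Rightarrow> real) \<Rightarrow> (nat \<Rightarrow> real) \<Rightarrow> real" where
  "q_part m \<nu> a b = prod_list (map (\<lambda>j. q m j a b) \<nu>)"

end

theory Submission
  imports Defs "HOL-Computational_Algebra.Polynomial_FPS"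
begin

text \<open>
  Write \<open>r\<^sub>i\<close> for the coefficient of \<open>a\<^sub>i\<^sup>k\<close> on the left. Lagrange interpolation of
  \<open>\<Prod>\<^sub>j (z - b\<^sub>j)\<close> at the nodes \<open>a\<^sub>i\<close> gives the partial fraction expansion
  \<open>\<Sum>\<^sub>i r\<^sub>i / (1 - a\<^sub>i t) = F(t) := \<Prod>\<^sub>j (1 - b\<^sub>j t) / \<Prod>\<^sub>i (1 - a\<^sub>i t)\<close>, so the left-hand side
  is the coefficient \<open>F\<^sub>k\<close>. The logarithmic derivative of \<open>F\<close> is \<open>\<Sum>\<^sub>n q\<^sub>n\<^sub>+\<^sub>1 t\<^sup>n\<close>, so
  \<open>(k + 1) F\<^sub>k\<^sub>+\<^sub>1 = \<Sum>\<^sub>i\<^sub>\<le>\<^sub>k q\<^sub>k\<^sub>+\<^sub>1\<^sub>-\<^sub>i F\<^sub>i\<close> with \<open>F\<^sub>0 = 1\<close>, and by induction every \<open>F\<^sub>k\<close> is a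
  rational combination of products \<open>q\<^sub>\<nu>\<close> with \<open>|\<nu>| \<le> k\<close>, uniformly in \<open>m\<close>, \<open>a\<close> and \<open>b\<close>.
\<close>

unbundle fps_syntax

definition compositions_upto :: "nat \<Rightarrow> nat list set" where
  "compositions_upto k = {\<nu>. (\<forall>x\<in>set \<nu>. 0 < x) \<and> sum_list \<nu> \<le> k}"

lemma length_le_sum_list_pos: "(\<forall>x\<in>set xs. 0 < (x::nat)) \<Longrightarrow> length xs \<le> sum_list xs"
  by (induction xs) auto

lemma finite_compositions_upto: "finite (compositions_upto k)"
proof (rule finite_subset)
  show "compositions_upto k \<subseteq> {xs. set xs \<subseteq> {..k} \<and> length xs \<le> k}"
    using member_le_sum_list length_le_sum_list_pos
    by (fastforce simp: compositions_upto_def)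
  show "finite {xs. set xs \<subseteq> {..k::nat} \<and> length xs \<le> k}"
    by (rule finite_lists_length_le) simp
qed

text \<open>Coefficients are indexed by lists rather than partitions, so that multiplying by \<open>q\<^sub>n\<close>
  is just \<open>Cons n\<close>; sorting collects them into partitions at the end.\<close>

definition rat_q_combination :: "nat \<Rightarrow> (nat \<Rightarrow> (nat \<Rightarrow> real) \<Rightarrow> (nat \<Rightarrow> real) \<Rightarrow> real) \<Rightarrow> bool" where
  "rat_q_combination k f \<longleftrightarrow> (\<exists>c :: nat list \<Rightarrow> rat. \<forall>m a b.
     f m a b = (\<Sum>\<nu>\<in>compositions_upto k. of_rat (c \<nu>) * q_part m \<nu> a b))"

lemma rat_q_combination_one: "rat_q_combination k (\<lambda>m a b. 1)"
proof -
  have "(\<Sum>\<nu>\<in>compositions_upto k. of_rat (if \<nu> = [] then 1 else 0) * q_part m \<nu> a b) = 1" for m a b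
  proof -
    have "(\<Sum>\<nu>\<in>compositions_upto k. of_rat (if \<nu> = [] then 1 else 0) * q_part m \<nu> a b)
        = (\<Sum>\<nu>\<in>compositions_upto k. if \<nu> = [] then q_part m \<nu> a b else 0)"
      by (rule sum.cong) auto
    also have "\<dots> = 1"
      using finite_compositions_upto by (simp add: compositions_upto_def q_part_def)
    finally show ?thesis .
  qed
  then show ?thesis
    unfolding rat_q_combination_def by metis
qed

lemma rat_q_combination_zero: "rat_q_combination k (\<lambda>m a b. 0)"
  unfolding rat_q_combination_def by (rule exI[of _ "\<lambda>_. 0"]) simp

lemma rat_q_combination_add:
  assumes "rat_q_combination k f" "rat_q_combination k g"
  shows "rat_q_combination k (\<lambda>m a b. f m a b + g m a b)"
proof -
  from assms obtain c d where
    "\<forall>m a b. f m a b = (\<Sum>\<nu>\<in>compositions_upto k. of_rat (c \<nu>) * q_part m \<nu> a b)"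
    "\<forall>m a b. g m a b = (\<Sum>\<nu>\<in>compositions_upto k. of_rat (d \<nu>) * q_part m \<nu> a b)"
    unfolding rat_q_combination_def by blast
  then show ?thesis
    unfolding rat_q_combination_def
    by (intro exI[of _ "\<lambda>\<nu>. c \<nu> + d \<nu>"]) (simp add: of_rat_add distrib_right sum.distrib)
qed

lemma rat_q_combination_scale:
  assumes "rat_q_combination k f"
  shows "rat_q_combination k (\<lambda>m a b. of_rat r * f m a b)"
proof -
  from assms obtain c where
    "\<forall>m a b. f m a b = (\<Sum>\<nu>\<in>compositions_upto k. of_rat (c \<nu>) * q_part m \<nu> a b)"
    unfolding rat_q_combination_def by blast
  then show ?thesis
    unfolding rat_q_combination_def
    by (intro exI[of _ "\<lambda>\<nu>. r * c \<nu>"]) (simp add: of_rat_mult sum_distrib_left mult.assoc)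
qed

lemma rat_q_combination_sum:
  "finite S \<Longrightarrow> (\<And>i. i \<in> S \<Longrightarrow> rat_q_combination k (g i)) \<Longrightarrow>
    rat_q_combination k (\<lambda>m a b. \<Sum>i\<in>S. g i m a b)"
  by (induction S rule: finite_induct) (auto intro: rat_q_combination_add rat_q_combination_zero)

lemma rat_q_combination_mult_q:
  assumes "0 < n" "rat_q_combination k f"
  shows "rat_q_combination (k + n) (\<lambda>m a b. q m n a b * f m a b)"
proof -
  from assms(2) obtain c where c:
    "\<And>m a b. f m a b = (\<Sum>\<nu>\<in>compositions_upto k. of_rat (c \<nu>) * q_part m \<nu> a b)"
    unfolding rat_q_combination_def by blast
  define c' where "c' \<mu> = (if \<mu> \<in> Cons n ` compositions_upto k then c (tl \<mu>) else 0)" for \<mu>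
  have sub: "Cons n ` compositions_upto k \<subseteq> compositions_upto (k + n)"
    using assms(1) by (auto simp: compositions_upto_def)
  have "q m n a b * f m a b
      = (\<Sum>\<nu>\<in>compositions_upto (k + n). of_rat (c' \<nu>) * q_part m \<nu> a b)" for m a b
  proof -
    have "(\<Sum>\<nu>\<in>compositions_upto (k + n). of_rat (c' \<nu>) * q_part m \<nu> a b)
        = (\<Sum>\<nu>\<in>Cons n ` compositions_upto k. of_rat (c' \<nu>) * q_part m \<nu> a b)"
      using finite_compositions_upto sub by (intro sum.mono_neutral_right) (auto simp: c'_def)
    also have "\<dots> = (\<Sum>\<nu>\<in>compositions_upto k. q m n a b * (of_rat (c \<nu>) * q_part m \<nu> a b))"
      by (simp add: sum.reindex c'_def q_part_def mult.left_commute)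
    finally show ?thesis
      by (simp add: c sum_distrib_left)
  qed
  then show ?thesis
    unfolding rat_q_combination_def by blast
qed

lemma q_part_mset_eq: "mset \<mu> = mset \<nu> \<Longrightarrow> q_part m \<mu> a b = q_part m \<nu> a b"
  unfolding q_part_def by (metis mset_map prod_mset_prod_list)

lemma rat_q_combination_partition_sum:
  assumes "rat_q_combination k f"
  shows "\<exists>\<xi> :: nat list \<Rightarrow> rat. \<forall>m a b.
    f m a b = (\<Sum>\<nu>\<in>{\<nu>. is_partition \<nu> \<and> sum_list \<nu> \<le> k}. of_rat (\<xi> \<nu>) * q_part m \<nu> a b)"
proof -
  from assms obtain c where c:
    "\<And>m a b. f m a b = (\<Sum>\<nu>\<in>compositions_upto k. of_rat (c \<nu>) * q_part m \<nu> a b)"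
    unfolding rat_q_combination_def by blast
  define P where "P = {\<nu>. is_partition \<nu> \<and> sum_list \<nu> \<le> k}"
  define sort_desc :: "nat list \<Rightarrow> nat list" where "sort_desc \<nu> = rev (sort \<nu>)" for \<nu>
  define \<xi> where "\<xi> \<mu> = (\<Sum>\<nu>\<in>{\<nu> \<in> compositions_upto k. sort_desc \<nu> = \<mu>}. c \<nu>)" for \<mu>
  have "P \<subseteq> compositions_upto k"
    by (auto simp: P_def compositions_upto_def is_partition_def)
  then have "finite P"
    using finite_compositions_upto by (rule finite_subset)
  have sort_desc_into_P: "sort_desc ` compositions_upto k \<subseteq> P"
  proof -
    have "mset (sort_desc \<nu>) = mset \<nu>" "sorted_wrt (\<ge>) (sort_desc \<nu>)" for \<nu>
      by (simp_all add: sort_desc_def sorted_wrt_rev)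
    then show ?thesis
      unfolding P_def compositions_upto_def is_partition_def
      by (auto simp flip: set_mset_mset sum_mset_sum_list)
  qed
  have "f m a b = (\<Sum>\<mu>\<in>P. of_rat (\<xi> \<mu>) * q_part m \<mu> a b)" for m a b
  proof -
    have "(\<Sum>\<mu>\<in>P. of_rat (\<xi> \<mu>) * q_part m \<mu> a b)
        = (\<Sum>\<mu>\<in>P. \<Sum>\<nu>\<in>{\<nu> \<in> compositions_upto k. sort_desc \<nu> = \<mu>}. of_rat (c \<nu>) * q_part m \<nu> a b)"
      by (intro sum.cong refl)
        (auto simp: \<xi>_def of_rat_sum sum_distrib_right sort_desc_def intro!: sum.cong q_part_mset_eq)
    also have "\<dots> = (\<Sum>\<nu>\<in>compositions_upto k. of_rat (c \<nu>) * q_part m \<nu> a b)"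
      using finite_compositions_upto \<open>finite P\<close> sort_desc_into_P by (rule sum.group)
    finally show ?thesis
      by (simp add: c)
  qed
  then show ?thesis
    unfolding P_def by blast
qed

definition fps_geometric :: "'a::comm_ring_1 \<Rightarrow> 'a fps" where
  "fps_geometric c = Abs_fps (\<lambda>n. c ^ n)"

lemma fps_geometric_mult_linear: "fps_geometric c * (1 - fps_const c * fps_X) = 1"
proof (rule fps_ext)
  fix n
  have "fps_geometric c * (1 - fps_const c * fps_X) = fps_geometric c - fps_const c * (fps_X * fps_geometric c)"
    by (simp add: algebra_simps)
  then show "(fps_geometric c * (1 - fps_const c * fps_X)) $ n = 1 $ n"
    by (cases n) (simp_all add: fps_geometric_def)
qed

lemma fps_deriv_geometric:
  "fps_deriv (fps_geometric c) = fps_geometric c * (fps_const c * fps_geometric c)"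
proof (rule fps_ext)
  fix n
  have "(fps_geometric c * fps_geometric c) $ n = (\<Sum>i=0..n. c ^ n)"
    by (auto simp: fps_mult_nth fps_geometric_def simp flip: power_add intro!: sum.cong)
  then show "fps_deriv (fps_geometric c) $ n = (fps_geometric c * (fps_const c * fps_geometric c)) $ n"
    by (simp add: fps_geometric_def mult.left_commute[of _ "fps_const c"])
qed

lemma fps_deriv_linear:
  "fps_deriv (1 - fps_const c * fps_X) = (1 - fps_const c * fps_X) * (fps_const (- c) * fps_geometric c)"
proof -
  have "(1 - fps_const c * fps_X) * (fps_const (- c) * fps_geometric c)
      = fps_const (- c) * (fps_geometric c * (1 - fps_const c * fps_X))"
    by (simp only: ac_simps)
  then show ?thesis
    by (simp add: fps_geometric_mult_linear)
qed

lemma fps_deriv_prod_logarithmic: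
  fixes f g :: "'i \<Rightarrow> 'a::comm_ring_1 fps"
  assumes "finite S" "\<And>i. i \<in> S \<Longrightarrow> fps_deriv (f i) = f i * g i"
  shows "fps_deriv (\<Prod>i\<in>S. f i) = (\<Prod>i\<in>S. f i) * (\<Sum>i\<in>S. g i)"
  using assms by (induction S rule: finite_induct) (auto simp: algebra_simps)

lemma fps_prod_nth_0: "finite S \<Longrightarrow> (\<Prod>i\<in>S. f i) $ 0 = (\<Prod>i\<in>S. f i $ 0)"
  by (induction S rule: finite_induct) auto

definition ratio_fps :: "nat \<Rightarrow> (nat \<Rightarrow> real) \<Rightarrow> (nat \<Rightarrow> real) \<Rightarrow> real fps" where
  "ratio_fps m a b = (\<Prod>j=1..m. 1 - fps_const (b j) * fps_X) * (\<Prod>i=0..m. fps_geometric (a i))"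

lemma fps_deriv_ratio_fps:
  "fps_deriv (ratio_fps m a b) = ratio_fps m a b * Abs_fps (\<lambda>n. q m (Suc n) a b)"
proof -
  have log_deriv: "(\<Sum>j=1..m. fps_const (- b j) * fps_geometric (b j))
      + (\<Sum>i=0..m. fps_const (a i) * fps_geometric (a i)) = Abs_fps (\<lambda>n. q m (Suc n) a b)"
    by (rule fps_ext) (simp add: q_def fps_sum_nth fps_geometric_def sum_negf)
  have "fps_deriv (\<Prod>j=1..m. 1 - fps_const (b j) * fps_X) = (\<Prod>j=1..m. 1 - fps_const (b j) * fps_X)
      * (\<Sum>j=1..m. fps_const (- b j) * fps_geometric (b j))"
    by (rule fps_deriv_prod_logarithmic) (simp_all only: fps_deriv_linear finite_atLeastAtMost)
  moreover have "fps_deriv (\<Prod>i=0..m. fps_geometric (a i))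
      = (\<Prod>i=0..m. fps_geometric (a i)) * (\<Sum>i=0..m. fps_const (a i) * fps_geometric (a i))"
    by (rule fps_deriv_prod_logarithmic) (simp_all only: fps_deriv_geometric finite_atLeastAtMost)
  ultimately show ?thesis
    unfolding ratio_fps_def fps_deriv_mult log_deriv[symmetric] by (simp add: algebra_simps)
qed

lemma ratio_fps_nth_0: "ratio_fps m a b $ 0 = 1"
  by (simp add: ratio_fps_def fps_prod_nth_0 fps_geometric_def)

lemma ratio_fps_nth_Suc:
  "real (Suc k) * ratio_fps m a b $ Suc k = (\<Sum>i=0..k. q m (Suc (k - i)) a b * ratio_fps m a b $ i)"
proof -
  have "real (Suc k) * ratio_fps m a b $ Suc k = (ratio_fps m a b * Abs_fps (\<lambda>n. q m (Suc n) a b)) $ k"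
    by (simp flip: fps_deriv_ratio_fps)
  also have "\<dots> = (\<Sum>i=0..k. q m (Suc (k - i)) a b * ratio_fps m a b $ i)"
    by (simp add: fps_mult_nth mult.commute)
  finally show ?thesis .
qed

lemma rat_q_combination_ratio_fps_nth: "rat_q_combination k (\<lambda>m a b. ratio_fps m a b $ k)"
proof (induction k rule: less_induct)
  case (less k)
  show ?case
  proof (cases k)
    case 0
    then show ?thesis
      by (simp add: ratio_fps_nth_0 rat_q_combination_one)
  next
    case (Suc k')
    have "(\<lambda>m a b. ratio_fps m a b $ k) = (\<lambda>m a b. of_rat (1 / of_nat (Suc k')) *
        (\<Sum>i=0..k'. q m (Suc (k' - i)) a b * ratio_fps m a b $ i))"
      unfolding Suc ratio_fps_nth_Suc[symmetric] by (simp add: of_rat_divide del: of_nat_Suc)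
    moreover have "rat_q_combination k (\<lambda>m a b. q m (Suc (k' - i)) a b * ratio_fps m a b $ i)"
      if "i \<in> {0..k'}" for i
    proof -
      have "rat_q_combination (i + Suc (k' - i)) (\<lambda>m a b. q m (Suc (k' - i)) a b * ratio_fps m a b $ i)"
        using that Suc by (intro rat_q_combination_mult_q less) auto
      then show ?thesis
        using that Suc by simp
    qed
    ultimately show ?thesis
      by (simp only: rat_q_combination_scale rat_q_combination_sum finite_atLeastAtMost)
  qed
qed

lemma degree_prod_linear: "degree (\<Prod>j\<in>S. [:- c j, 1:] :: 'a::idom poly) = card S"
  by (subst degree_prod_sum_eq) simp_all

lemma lagrange_interpolation:
  fixes p :: "'a::field poly"
  assumes inj: "inj_on a {0..m}" and deg: "degree p \<le> m"
  shows "poly p z = (\<Sum>i=0..m. poly p (a i) / (\<Prod>j\<in>{0..m}-{i}. a i - a j) * (\<Prod>j\<in>{0..m}-{i}. z - a j))"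
proof -
  define L where "L = (\<Sum>i=0..m. smult (poly p (a i) / (\<Prod>j\<in>{0..m}-{i}. a i - a j))
    (\<Prod>j\<in>{0..m}-{i}. [:- a j, 1:]))"
  have card: "card (a ` {0..m}) = Suc m"
    using inj by (simp add: card_image)
  have "p = L"
  proof (rule poly_eqI_degree[where A = "a ` {0..m}"])
    fix x assume "x \<in> a ` {0..m}"
    then obtain l where l: "l \<in> {0..m}" and x: "x = a l" by auto
    define w where "w i = (\<Prod>j\<in>{0..m}-{i}. a l - a j)" for i
    have "poly L x = (\<Sum>i=0..m. poly p (a i) / (\<Prod>j\<in>{0..m}-{i}. a i - a j) * w i)"
      by (simp add: L_def w_def poly_sum poly_prod x)
    also have "\<dots> = poly p (a l) / w l * w l"
    proof -
      have "w i = 0" if "i \<in> {0..m} - {l}" for i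
        unfolding w_def using that l by (intro prod_zero) auto
      then have "(\<Sum>i\<in>{0..m}-{l}. poly p (a i) / (\<Prod>j\<in>{0..m}-{i}. a i - a j) * w i) = 0"
        by simp
      then show ?thesis
        by (simp add: sum.remove[OF _ l] w_def[of l])
    qed
    also have "\<dots> = poly p x"
      using inj l by (auto simp: w_def x inj_on_def)
    finally show "poly p x = poly L x" ..
  next
    show "degree p < card (a ` {0..m})"
      using deg card by simp
    have "degree L \<le> m"
      unfolding L_def
      by (intro degree_sum_le order.trans[OF degree_smult_le]) (simp_all add: degree_prod_linear)
    then show "degree L < card (a ` {0..m})"
      using card by simp
  qed
  then have "poly p z = poly L z"
    by simp
  also have "\<dots> = (\<Sum>i=0..m. poly p (a i) / (\<Prod>j\<in>{0..m}-{i}. a i - a j) * (\<Prod>j\<in>{0..m}-{i}. z - a j))"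
    by (simp add: L_def poly_sum poly_prod)
  finally show ?thesis .
qed

definition partial_fraction_coeff :: "nat \<Rightarrow> (nat \<Rightarrow> real) \<Rightarrow> (nat \<Rightarrow> real) \<Rightarrow> nat \<Rightarrow> real" where
  "partial_fraction_coeff m a b i = (\<Prod>j=1..m. a i - b j) / (\<Prod>j\<in>{0..m}-{i}. a i - a j)"

lemma prod_linear_partial_fractions:
  assumes "inj_on a {0..m}"
  shows "(\<Prod>j=1..m. z - b j) = (\<Sum>i=0..m. partial_fraction_coeff m a b i * (\<Prod>j\<in>{0..m}-{i}. z - a j))"
proof -
  let ?p = "\<Prod>j=1..m. [:- b j, 1:]"
  have "poly ?p w = (\<Prod>j=1..m. w - b j)" for w
    by (simp add: poly_prod)
  moreover have "degree ?p \<le> m"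
    by (simp only: degree_prod_linear card_atLeastAtMost diff_Suc_1 order_refl)
  ultimately show ?thesis
    using lagrange_interpolation[OF assms, of ?p z] by (simp add: partial_fraction_coeff_def)
qed

lemma poly_eqI_nonzero:
  fixes p r :: "'a::{idom, ring_char_0} poly"
  assumes "\<And>x. x \<noteq> 0 \<Longrightarrow> poly p x = poly r x"
  shows "p = r"
proof (rule ccontr)
  assume "p \<noteq> r"
  then have "finite {x. poly (p - r) x = 0}"
    by (intro poly_roots_finite) simp
  moreover have "UNIV \<subseteq> insert 0 {x. poly (p - r) x = 0}"
    using assms by auto
  ultimately show False
    using infinite_UNIV_char_0 finite_subset by blast
qed

lemma prod_1_minus_mult_eq:
  fixes x :: "'a::field"
  assumes "x \<noteq> 0" "finite S"
  shows "(\<Prod>j\<in>S. 1 - c j * x) = x ^ card S * (\<Prod>j\<in>S. inverse x - c j)"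
proof -
  have "(\<Prod>j\<in>S. 1 - c j * x) = (\<Prod>j\<in>S. x * (inverse x - c j))"
    using assms(1) by (intro prod.cong) (simp_all add: algebra_simps)
  then show ?thesis
    using assms(2) by (simp add: prod.distrib)
qed

text \<open>Substitute \<open>z = 1/x\<close> in the previous expansion and multiply by \<open>x\<^sup>m\<close>.\<close>

lemma reversed_partial_fractions:
  assumes "inj_on a {0..m}"
  shows "(\<Sum>i=0..m. smult (partial_fraction_coeff m a b i) (\<Prod>j\<in>{0..m}-{i}. [:1, - a j:]))
       = (\<Prod>j=1..m. [:1, - b j:])"
proof (rule poly_eqI_nonzero)
  fix x :: real
  assume x: "x \<noteq> 0"
  have "poly (\<Prod>j=1..m. [:1, - b j:]) x = x ^ m * (\<Prod>j=1..m. inverse x - b j)"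
    using prod_1_minus_mult_eq[OF x, of "{1..m}" b] by (simp add: poly_prod mult.commute)
  also have "\<dots> = (\<Sum>i=0..m. partial_fraction_coeff m a b i * (x ^ m * (\<Prod>j\<in>{0..m}-{i}. inverse x - a j)))"
    unfolding prod_linear_partial_fractions[OF assms] sum_distrib_left by (simp add: mult.left_commute)
  also have "\<dots> = poly (\<Sum>i=0..m. smult (partial_fraction_coeff m a b i) (\<Prod>j\<in>{0..m}-{i}. [:1, - a j:])) x"
  proof -
    have "x ^ m * (\<Prod>j\<in>{0..m}-{i}. inverse x - a j) = poly (\<Prod>j\<in>{0..m}-{i}. [:1, - a j:]) x"
      if "i \<in> {0..m}" for i
      using prod_1_minus_mult_eq[OF x, of "{0..m}-{i}" a] that by (simp add: poly_prod mult.commute)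
    then show ?thesis
      by (simp add: poly_sum)
  qed
  finally show "poly (\<Sum>i=0..m. smult (partial_fraction_coeff m a b i) (\<Prod>j\<in>{0..m}-{i}. [:1, - a j:])) x
      = poly (\<Prod>j=1..m. [:1, - b j:]) x" ..
qed

lemma fps_of_poly_linear: "fps_of_poly [:1, - c:] = 1 - fps_const (c::'a::comm_ring_1) * fps_X"
  by (simp add: fps_of_poly_pCons fps_of_poly_const)

lemma ratio_fps_partial_fractions:
  assumes "inj_on a {0..m}"
  shows "ratio_fps m a b = (\<Sum>i=0..m. fps_const (partial_fraction_coeff m a b i) * fps_geometric (a i))"
    (is "_ = ?G")
proof -
  define l where "l j = 1 - fps_const (a j) * fps_X" for j
  have l_geometric: "l i * fps_geometric (a i) = 1" for i
    unfolding l_def by (metis fps_geometric_mult_linear mult.commute)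
  have "?G * (\<Prod>i=0..m. l i)
      = (\<Sum>i=0..m. fps_const (partial_fraction_coeff m a b i) * (\<Prod>j\<in>{0..m}-{i}. l j))"
    unfolding sum_distrib_right
  proof (intro sum.cong refl)
    fix i assume "i \<in> {0..m}"
    then have "(\<Prod>i=0..m. l i) = l i * (\<Prod>j\<in>{0..m}-{i}. l j)"
      by (simp add: prod.remove)
    then show "fps_const (partial_fraction_coeff m a b i) * fps_geometric (a i) * (\<Prod>i=0..m. l i)
        = fps_const (partial_fraction_coeff m a b i) * (\<Prod>j\<in>{0..m}-{i}. l j)"
      by (simp add: l_geometric mult.assoc mult.left_commute[of "fps_geometric (a i)"])
  qed
  also have "\<dots> = (\<Prod>j=1..m. 1 - fps_const (b j) * fps_X)"
    using arg_cong[OF reversed_partial_fractions[OF assms, of b], of fps_of_poly]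
    by (simp only: l_def fps_of_poly_sum fps_of_poly_prod fps_of_poly_smult fps_of_poly_linear)
  finally have "?G * (\<Prod>i=0..m. l i) * (\<Prod>i=0..m. fps_geometric (a i)) = ratio_fps m a b"
    by (simp add: ratio_fps_def)
  moreover have "(\<Prod>i=0..m. l i) * (\<Prod>i=0..m. fps_geometric (a i)) = 1"
    by (simp add: l_geometric flip: prod.distrib)
  ultimately show ?thesis
    by (simp add: mult.assoc)
qed

lemma ratio_fps_nth:
  "inj_on a {0..m} \<Longrightarrow> ratio_fps m a b $ k = (\<Sum>i=0..m. partial_fraction_coeff m a b i * a i ^ k)"
  by (simp add: ratio_fps_partial_fractions fps_sum_nth fps_geometric_def)

lemma inj_on_atLeastAtMost_if_Suc_less:
  fixes a :: "nat \<Rightarrow> 'a::order"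
  assumes "\<forall>i<m. a i < a (Suc i)"
  shows "inj_on a {0..m}"
proof -
  have "j \<le> m \<longrightarrow> a i < a j" if "i < j" for i j
    using that by (induction rule: less_Suc_induct) (use assms in \<open>auto intro: less_trans\<close>)
  then have "strict_mono_on {0..m} a"
    by (auto intro: strict_mono_onI)
  then show ?thesis
    by (rule strict_mono_on_imp_inj_on)
qed

theorem theorem3p2:
  fixes k :: nat
  shows "\<exists>\<xi> :: nat list \<Rightarrow> rat. \<forall>(m::nat) (a::nat \<Rightarrow> real) (b::nat \<Rightarrow> real).
    (\<forall>i<m. a i < a (Suc i)) \<and> (\<forall>j. 1 \<le> j \<and> j < m \<longrightarrow> b j < b (Suc j)) \<longrightarrow>
    (\<Sum>i=0..m. (\<Prod>j=1..m. a i - b j) / (\<Prod>j\<in>{0..m} - {i}. a i - a j) * a i ^ k)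
      = (\<Sum>\<nu>\<in>{\<nu>. is_partition \<nu> \<and> sum_list \<nu> \<le> k}. of_rat (\<xi> \<nu>) * q_part m \<nu> a b)"
proof -
  obtain \<xi> where \<xi>: "\<forall>m a b. ratio_fps m a b $ k =
      (\<Sum>\<nu>\<in>{\<nu>. is_partition \<nu> \<and> sum_list \<nu> \<le> k}. of_rat (\<xi> \<nu>) * q_part m \<nu> a b)"
    using rat_q_combination_partition_sum[OF rat_q_combination_ratio_fps_nth] by blast
  have "(\<Sum>i=0..m. (\<Prod>j=1..m. a i - b j) / (\<Prod>j\<in>{0..m} - {i}. a i - a j) * a i ^ k)
      = ratio_fps m a b $ k" if "\<forall>i<m. a i < a (Suc i)" for m a b
    using ratio_fps_nth[OF inj_on_atLeastAtMost_if_Suc_less[OF that]]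
    by (simp add: partial_fraction_coeff_def)
  with \<xi> show ?thesis
    by auto
qed

end
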